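(* For each $n\in\mathbb{N}$, let $\ell_n\in\mathcal{D}^-[0,\infty)$, $r_n\in\mathcal{D}^+[0,\infty)$ with $\ell_n\le r_n$, and let $\psi_n\in\mathcal{D}[0,\infty)$. Suppose there exist $\ell\in\mathcal{D}^-[0,\infty)$, $r\in\mathcal{D}^+[0,\infty)$ and $\psi\in\mathcal{D}[0,\infty)$ such that $\psi_n\to\psi$, $\ell_n\to\ell$ and $r_n\to r$ uniformly on compacts as $n\to\infty$. Suppose for each $n$, $(\phi_n,\eta_n)$ solves the ESP on $[\ell_n(\cdot),r_n(\cdot)]$ for $\psi_n$. If $\phi_n\to\phi$ uniformly on compacts, then $(\phi,\phi-\psi)$ solves the ESP on $[\ell(\cdot),r(\cdot)]$ for $\psi$.
   Context: $\mathcal{D}[0,\infty)$ denotes the càdlàg functions $[0,\infty)\to(-\infty,\infty)$; $\mathcal{D}^-[0,\infty)$ (resp. $\mathcal{D}^+[0,\infty)$) denotes càdlàg functions with values in $[-\infty,\infty)$ (resp. $(-\infty,\infty]$). $f_n\to f$ uniformly on compacts means $\sup_{s\in[0,T]}|f_n(s)-f(s)|\to0$ for every $T<\infty$. ESP: given $\ell\in\mathcal{D}^-[0,\infty)$, $r\in\mathcal{D}^+[0,\infty)$ with $\ell\le r$ and $\psi\in\mathcal{D}[0,\infty)$, $(\phi,\eta)\in\mathcal{D}[0,\infty)^2$ solves the ESP on $[\ell(\cdot),r(\cdot)]$ for $\psi$ if (1) $\phi(t)=\psi(t)+\eta(t)\in[\ell(t),r(t)]$ for all $t\ge0$; (2)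 for all $0\le s\le t$: $\eta(t)-\eta(s)\ge0$ if $\phi(u)<r(u)$ for all $u\in(s,t]$, and $\eta(t)-\eta(s)\le0$ if $\phi(u)>\ell(u)$ for all $u\in(s,t]$; (3) for all $t\ge0$: $\eta(t)-\eta(t-)\ge0$ if $\phi(t)<r(t)$, and $\eta(t)-\eta(t-)\le0$ if $\phi(t)>\ell(t)$, where $\eta(0-)=0$. *)

theory Defs
  imports "HOL-Analysis.Analysis"
begin

text \<open>Real-valued cadlag functions on [0,oo): right-continuous at every t >= 0,
  left limit (in the reals) at every t > 0. Values at negative arguments are irrelevant.\<close>
definition cadlag :: "(real \<Rightarrow> real) \<Rightarrow> bool" where
  "cadlag f \<longleftrightarrow>
     (\<forall>t\<ge>0. continuous (at_right t) f) \<and>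
     (\<forall>t>0. \<exists>L. (f \<longlongrightarrow> L) (at_left t))"

definition cadlag_minus :: "(real \<Rightarrow> ereal) \<Rightarrow> bool" where
  "cadlag_minus f \<longleftrightarrow>
     (\<forall>t\<ge>0. f t \<noteq> \<infinity>) \<and>
     (\<forall>t\<ge>0. continuous (at_right t) f) \<and>
     (\<forall>t>0. \<exists>L. L \<noteq> \<infinity> \<and> (f \<longlongrightarrow> L) (at_left t))"

definition cadlag_plus :: "(real \<Rightarrow> ereal) \<Rightarrow> bool" where
  "cadlag_plus f \<longleftrightarrow>
     (\<forall>t\<ge>0. f t \<noteq> -\<infinity>) \<and>
     (\<forall>t\<ge>0. continuous (at_right t) f) \<and>
     (\<forall>t>0. \<exists>L. L \<noteq> -\<infinity> \<and> (f \<longlongrightarrow> L) (at_left t))"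

definition ucc :: "(nat \<Rightarrow> real \<Rightarrow> real) \<Rightarrow> (real \<Rightarrow> real) \<Rightarrow> bool" where
  "ucc fs f \<longleftrightarrow> (\<forall>T. \<forall>\<epsilon>>0. \<forall>\<^sub>F n in sequentially. \<forall>s\<in>{0..T}. \<bar>fs n s - f s\<bar> < \<epsilon>)"

text \<open>Distance on extended reals with the convention |a - a| = 0 (also for infinite a),
  |a - b| = oo if a /= b and one of them is infinite.\<close>
definition edist :: "ereal \<Rightarrow> ereal \<Rightarrow> ereal" where
  "edist a b = (if a = b then 0 else if \<bar>a\<bar> \<noteq> \<infinity> \<and> \<bar>b\<bar> \<noteq> \<infinity> then \<bar>a - b\<bar> else \<infinity>)"

definition ucc_ereal :: "(nat \<Rightarrow> real \<Rightarrow> ereal) \<Rightarrow> (real \<Rightarrow> ereal) \<Rightarrow> bool" where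
  "ucc_ereal fs f \<longleftrightarrow>
     (\<forall>T. \<forall>\<epsilon>>0. \<forall>\<^sub>F n in sequentially. \<forall>s\<in>{0..T}. edist (fs n s) (f s) < ereal \<epsilon>)"

text \<open>Extended Skorokhod problem on [l(.), r(.)] for psi; eta(0-) = 0.\<close>
definition ESP :: "(real \<Rightarrow> ereal) \<Rightarrow> (real \<Rightarrow> ereal) \<Rightarrow> (real \<Rightarrow> real)
                   \<Rightarrow> (real \<Rightarrow> real) \<Rightarrow> (real \<Rightarrow> real) \<Rightarrow> bool" where
  "ESP l r psi phi eta \<longleftrightarrow>
     cadlag phi \<and> cadlag eta \<and>
     (\<forall>t\<ge>0. phi t = psi t + eta t \<and> l t \<le> ereal (phi t) \<and> ereal (phi t) \<le> r t) \<and>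
     (\<forall>s t. 0 \<le> s \<and> s \<le> t \<longrightarrow>
        ((\<forall>u\<in>{s<..t}. ereal (phi u) < r u) \<longrightarrow> eta t - eta s \<ge> 0) \<and>
        ((\<forall>u\<in>{s<..t}. ereal (phi u) > l u) \<longrightarrow> eta t - eta s \<le> 0)) \<and>
     (\<forall>t\<ge>0. let jump = eta t - (if t = 0 then 0 else Lim (at_left t) eta) in
        (ereal (phi t) < r t \<longrightarrow> jump \<ge> 0) \<and>
        (ereal (phi t) > l t \<longrightarrow> jump \<le> 0))"

end

theory Submission
  imports Defs
begin

text \<open>
  The ESP conditions split into an upper half (\<open>\<eta>\<close> cannot decrease while \<open>\<phi>\<close> stays strictly
  below \<open>r\<close>) and a lower half, which is the upper half for \<open>(-\<phi>, -l, -\<eta>)\<close>; so it suffices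
  to pass the upper half to the limit. If \<open>\<phi>(u) < r(u)\<close>, right-continuity of \<open>\<phi>\<close> and \<open>r\<close>
  together with uniform convergence give \<open>\<phi>\<^sub>n < r\<^sub>n\<close> on some \<open>[u, b)\<close> for all large \<open>n\<close>,
  so each \<open>\<eta>\<^sub>n\<close> is nondecreasing there and jumps upwards at \<open>u\<close>. Pointwise convergence of the
  \<open>\<eta>\<^sub>n\<close>, and convergence of their left limits (a uniform limit commutes with one-sided limits),
  make \<open>\<eta>\<close> nondecreasing just right of \<open>u\<close> with a nonnegative jump at \<open>u\<close>. A supremum
  argument turns these local statements into monotonicity on any \<open>(s, t]\<close> on which \<open>\<phi> < r\<close>,
  and right-continuity of \<open>\<eta>\<close> extends it to \<open>s\<close>. The constraint \<open>l \<le> \<phi> \<le> r\<close> passes to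
  the limit pointwise.
\<close>

lemma uniform_limit_swap_convergent:
  fixes fs :: "nat \<Rightarrow> 'a \<Rightarrow> 'b::complete_space"
  assumes u: "uniform_limit S fs f sequentially"
    and lim: "\<And>n. (fs n \<longlongrightarrow> L n) F" and S: "\<forall>\<^sub>F x in F. x \<in> S" and F: "F \<noteq> bot"
  shows "\<exists>L0. L \<longlonglongrightarrow> L0 \<and> (f \<longlongrightarrow> L0) F"
proof -
  have "Cauchy L"
  proof (rule metric_CauchyI)
    fix e :: real assume "e > 0"
    then obtain M where M: "\<And>x m n. x \<in> S \<Longrightarrow> m \<ge> M \<Longrightarrow> n \<ge> M \<Longrightarrow> dist (fs m x) (fs n x) < e/2"
      using uniformly_convergent_Cauchy[OF uniformly_convergentI[OF u]] half_gt_zero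
      unfolding uniformly_Cauchy_on_def by meson
    have "dist (L m) (L n) \<le> e/2" if "m \<ge> M" "n \<ge> M" for m n
    proof (rule tendsto_upperbound[OF tendsto_dist[OF lim lim] _ F])
      show "\<forall>\<^sub>F x in F. dist (fs m x) (fs n x) \<le> e/2"
        using S by eventually_elim (use M that in \<open>auto intro: less_imp_le\<close>)
    qed
    with \<open>e > 0\<close> show "\<exists>M. \<forall>m\<ge>M. \<forall>n\<ge>M. dist (L m) (L n) < e"
      by (smt (verit, best) field_sum_of_halves)
  qed
  then obtain L0 where "L \<longlonglongrightarrow> L0"
    using Cauchy_convergent_iff convergent_def by blast
  moreover have "(f \<longlongrightarrow> L0) F"
    by (rule swap_uniform_limit'[OF _ calculation u S]) (simp_all add: lim)
  ultimately show ?thesis by blast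
qed

lemma edist_gt: "edist x y < ereal c \<Longrightarrow> ereal M < y \<Longrightarrow> ereal (M - c) < x"
  by (cases x; cases y) (auto simp: edist_def split: if_splits)

lemma edist_uminus: "edist (-a) (-b) = edist a b"
  by (cases a; cases b) (auto simp: edist_def abs_minus_commute)

lemma ereal_uminus_compare:
  fixes a :: ereal
  shows "ereal (- x) < - a \<longleftrightarrow> a < ereal x" and "- a \<le> ereal (- x) \<longleftrightarrow> ereal x \<le> a"
  by (cases a; simp)+

lemma ucc_iff_uniform_limit:
  "ucc fs f \<longleftrightarrow> (\<forall>T. uniform_limit {0..T} fs f sequentially)"
  by (simp add: ucc_def uniform_limit_iff dist_real_def)

lemma ucc_pointwise: "ucc fs f \<Longrightarrow> 0 \<le> t \<Longrightarrow> (\<lambda>n. fs n t) \<longlonglongrightarrow> f t"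
  by (auto simp: ucc_iff_uniform_limit intro: tendsto_uniform_limitI)

lemma ucc_uminus: "ucc fs f \<Longrightarrow> ucc (\<lambda>n x. - fs n x) (\<lambda>x. - f x)"
  by (simp add: ucc_iff_uniform_limit uniform_limit_uminus)

lemma ucc_diff: "ucc fs f \<Longrightarrow> ucc gs g \<Longrightarrow> ucc (\<lambda>n x. fs n x - gs n x) (\<lambda>x. f x - g x)"
  by (simp add: ucc_iff_uniform_limit uniform_limit_minus)

lemma ucc_cong: "ucc fs f \<Longrightarrow> (\<And>n x. 0 \<le> x \<Longrightarrow> gs n x = fs n x) \<Longrightarrow> ucc gs f"
  unfolding ucc_iff_uniform_limit by (subst uniform_limit_cong') auto

lemma ucc_ereal_uminus: "ucc_ereal fs f \<Longrightarrow> ucc_ereal (\<lambda>n x. - fs n x) (\<lambda>x. - f x)"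
  unfolding ucc_ereal_def by (simp add: edist_uminus)

lemma cadlag_diff: "cadlag f \<Longrightarrow> cadlag g \<Longrightarrow> cadlag (\<lambda>x. f x - g x)"
  unfolding cadlag_def by (blast intro: continuous_diff tendsto_diff)

lemma cadlag_uminus: "cadlag f \<Longrightarrow> cadlag (\<lambda>x. - f x)"
  unfolding cadlag_def by (blast intro: continuous_minus tendsto_minus)

lemma cadlag_tendsto_Lim_at_left: "cadlag f \<Longrightarrow> 0 < t \<Longrightarrow> (f \<longlongrightarrow> Lim (at_left t) f) (at_left t)"
  unfolding cadlag_def by (metis tendsto_Lim trivial_limit_at_left_real)

lemma ucc_Lim_at_left:
  assumes u: "ucc fs f" and c: "\<And>n. cadlag (fs n)" and t: "0 < t"
  shows "(\<lambda>n. Lim (at_left t) (fs n)) \<longlonglongrightarrow> Lim (at_left t) f"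
    and "(f \<longlongrightarrow> Lim (at_left t) f) (at_left t)"
proof -
  obtain L0 where "(\<lambda>n. Lim (at_left t) (fs n)) \<longlonglongrightarrow> L0" and L0: "(f \<longlongrightarrow> L0) (at_left t)"
  proof (rule uniform_limit_swap_convergent[THEN exE])
    show "uniform_limit {0..t} fs f sequentially" using u by (simp add: ucc_iff_uniform_limit)
    show "(fs n \<longlongrightarrow> Lim (at_left t) (fs n)) (at_left t)" for n
      using cadlag_tendsto_Lim_at_left[OF c t] .
    show "\<forall>\<^sub>F x in at_left t. x \<in> {0..t}"
      using eventually_at_left_real[OF t] by eventually_elim auto
  qed (auto simp: t)
  moreover have "Lim (at_left t) f = L0" using L0 by (rule tendsto_Lim[rotated]) simp
  ultimately show "(\<lambda>n. Lim (at_left t) (fs n)) \<longlonglongrightarrow> Lim (at_left t) f"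
    and "(f \<longlongrightarrow> Lim (at_left t) f) (at_left t)" by simp_all
qed

lemma ucc_cadlag:
  assumes u: "ucc fs f" and c: "\<And>n. cadlag (fs n)"
  shows "cadlag f"
  unfolding cadlag_def
proof (intro conjI allI impI)
  fix t :: real assume t: "0 \<le> t"
  have "((fs n) \<longlongrightarrow> fs n t) (at_right t)" for n
    using c[of n] t by (simp add: cadlag_def continuous_within)
  then show "continuous (at_right t) f"
    unfolding continuous_within
  proof (rule swap_uniform_limit'[OF always_eventually[OF allI]])
    show "(\<lambda>n. fs n t) \<longlonglongrightarrow> f t" using ucc_pointwise[OF u t] .
    show "uniform_limit {0..t+1} fs f sequentially" using u by (simp add: ucc_iff_uniform_limit)
    show "\<forall>\<^sub>F x in at_right t. x \<in> {0..t+1}"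
      using eventually_at_right_real[of t "t+1"] t by (auto elim: eventually_mono)
  qed simp
next
  fix t :: real assume "0 < t"
  then show "\<exists>L. (f \<longlongrightarrow> L) (at_left t)" using ucc_Lim_at_left[OF u c] by blast
qed

lemma ucc_ereal_le_limit:
  assumes uy: "ucc_ereal xs y" and up: "ucc ps p" and t: "0 \<le> t"
    and le: "\<And>n. xs n t \<le> ereal (ps n t)"
  shows "y t \<le> ereal (p t)"
proof (rule ccontr)
  assume "\<not> y t \<le> ereal (p t)"
  then have "ereal (p t) < y t" by simp
  then obtain M where M: "ereal (p t) < ereal M" "ereal M < y t"
    using ereal_dense2 by blast
  define c where "c = (M - p t) / 2"
  have "c > 0" using M by (simp add: c_def)
  from uy[unfolded ucc_ereal_def, rule_format, OF this, of t] up[unfolded ucc_def, rule_format, OF this, of t]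
  have "\<forall>\<^sub>F n in sequentially. edist (xs n t) (y t) < ereal c \<and> \<bar>ps n t - p t\<bar> < c"
    by eventually_elim (use t in auto)
  then obtain n where n: "edist (xs n t) (y t) < ereal c" "\<bar>ps n t - p t\<bar> < c"
    unfolding eventually_sequentially by blast
  have "ereal (M - c) < xs n t" using n(1) M(2) by (rule edist_gt)
  moreover have "ps n t < M - c" using n(2) unfolding c_def abs_less_iff by (auto simp: field_simps)
  ultimately have "ereal (ps n t) < xs n t"
    using order.strict_trans[of "ereal (ps n t)" "ereal (M - c)"] by simp
  then show False using le[of n] by simp
qed

lemma ucc_limit_between:
  assumes "ucc_ereal ls l" and "ucc_ereal rs r" and "ucc phis phi" and t: "0 \<le> t"
    and between: "\<And>n. ls n t \<le> ereal (phis n t) \<and> ereal (phis n t) \<le> rs n t"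
  shows "l t \<le> ereal (phi t) \<and> ereal (phi t) \<le> r t"
proof
  show "l t \<le> ereal (phi t)"
    using assms(1,3) t by (rule ucc_ereal_le_limit) (use between in blast)
  have "- r t \<le> ereal (- phi t)"
    using ucc_ereal_uminus[OF assms(2)] ucc_uminus[OF assms(3)] t
    by (rule ucc_ereal_le_limit) (use between in \<open>simp add: ereal_uminus_compare\<close>)
  then show "ereal (phi t) \<le> r t" by (simp add: ereal_uminus_compare)
qed

lemma right_locally_mono_imp_le:
  fixes f :: "real \<Rightarrow> real"
  assumes ab: "a \<le> b"
    and right: "\<And>u. u \<in> {a..b} \<Longrightarrow> \<exists>\<delta>>0. \<forall>x y. u \<le> x \<longrightarrow> x \<le> y \<longrightarrow> y < u + \<delta> \<longrightarrow> f x \<le> f y"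
    and left_lim: "\<And>u. u \<in> {a<..b} \<Longrightarrow> \<exists>L. (f \<longlongrightarrow> L) (at_left u)"
    and jump: "\<And>u L. u \<in> {a<..b} \<Longrightarrow> (f \<longlongrightarrow> L) (at_left u) \<Longrightarrow> L \<le> f u"
  shows "f a \<le> f b"
proof -
  \<comment> \<open>The jump hypothesis puts \<open>c = Sup S\<close> into \<open>S\<close>; right-local monotonicity then forces \<open>c = b\<close>.\<close>
  define S where "S = {x\<in>{a..b}. \<forall>y\<in>{a..x}. f a \<le> f y}"
  define c where "c = Sup S"
  have aS: "a \<in> S" using ab by (auto simp: S_def)
  have bdd: "bdd_above S" by (auto simp: S_def bdd_above_def)
  have ac: "a \<le> c" unfolding c_def using aS bdd by (rule cSup_upper)
  have cb: "c \<le> b" unfolding c_def using aS by (intro cSup_least) (auto simp: S_def)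
  have below_c: "f a \<le> f y" if "a \<le> y" "y < c" for y
  proof -
    from less_cSupD[of S y] aS that obtain x where "x \<in> S" "y < x" unfolding c_def by blast
    then show ?thesis using that by (auto simp: S_def)
  qed
  have fc: "f a \<le> f c"
  proof (cases "c = a")
    case False
    then have "a < c" using ac by simp
    then obtain L where L: "(f \<longlongrightarrow> L) (at_left c)" using left_lim cb by auto
    have "\<forall>\<^sub>F y in at_left c. f a \<le> f y"
      using eventually_at_left_real[OF \<open>a < c\<close>] by eventually_elim (auto intro: below_c)
    then have "f a \<le> L" by (intro tendsto_lowerbound[OF L]) auto
    also have "L \<le> f c" using jump L \<open>a < c\<close> cb by auto
    finally show ?thesis .
  qed simp
  have cS: "c \<in> S"
    using ac cb below_c fc by (auto simp: S_def) (metis antisym_conv2)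
  have "c = b"
  proof (rule ccontr)
    assume "c \<noteq> b"
    then have "c < b" using cb by simp
    obtain \<delta> where \<delta>: "\<delta> > 0" "\<forall>x y. c \<le> x \<longrightarrow> x \<le> y \<longrightarrow> y < c + \<delta> \<longrightarrow> f x \<le> f y"
      using right[of c] ac cb by auto
    define x where "x = min (c + \<delta>/2) b"
    have "c < x" using \<delta> \<open>c < b\<close> by (simp add: x_def)
    have "x \<in> S"
      unfolding S_def
    proof (intro CollectI conjI ballI)
      show "x \<in> {a..b}" using \<open>c < x\<close> ac by (auto simp: x_def)
      fix y assume y: "y \<in> {a..x}"
      show "f a \<le> f y"
      proof (cases "y \<le> c")
        case True then show ?thesis using cS y by (auto simp: S_def)
      next
        case False
        then have "f c \<le> f y" using \<delta> y by (auto simp: x_def)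
        then show ?thesis using fc by simp
      qed
    qed
    then have "x \<le> c" unfolding c_def using bdd by (rule cSup_upper)
    then show False using \<open>c < x\<close> by simp
  qed
  then show ?thesis using cS ab by (auto simp: S_def)
qed

lemma ucc_eventually_strictly_below:
  assumes uphi: "ucc phis phi" and ur: "ucc_ereal rs r" and u: "0 \<le> u"
    and cphi: "continuous (at_right u) phi" and cr: "continuous (at_right u) r"
    and below: "ereal (phi u) < r u"
  shows "\<exists>b>u. \<forall>\<^sub>F n in sequentially. \<forall>v\<in>{u..<b}. ereal (phis n v) < rs n v"
proof -
  obtain M1 where M1: "ereal (phi u) < ereal M1" "ereal M1 < r u"
    using ereal_dense2[OF below] by blast
  obtain M2 where M2: "ereal M1 < ereal M2" "ereal M2 < r u"
    using ereal_dense2[OF M1(2)] by blast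
  have "\<forall>\<^sub>F v in at_right u. phi v < M1"
    using cphi M1(1) unfolding continuous_within by (intro order_tendstoD(2)) auto
  moreover have "\<forall>\<^sub>F v in at_right u. ereal M2 < r v"
    using cr M2(2) unfolding continuous_within by (intro order_tendstoD(1)) auto
  ultimately have "\<forall>\<^sub>F v in at_right u. phi v < M1 \<and> ereal M2 < r v"
    by (rule eventually_conj)
  then obtain b where "b > u" and b: "\<And>v. u < v \<Longrightarrow> v < b \<Longrightarrow> phi v < M1 \<and> ereal M2 < r v"
    using eventually_at_right[of u "u+1"] by auto
  have near: "phi v < M1 \<and> ereal M2 < r v" if "v \<in> {u..<b}" for v
    using that b M1(1) M2(2) by (cases "v = u") auto
  define c where "c = (M2 - M1) / 2"
  have "c > 0" using M2(1) by (simp add: c_def)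
  from uphi[unfolded ucc_def, rule_format, OF \<open>c > 0\<close>, of b]
    ur[unfolded ucc_ereal_def, rule_format, OF \<open>c > 0\<close>, of b]
  have "\<forall>\<^sub>F n in sequentially. \<forall>v\<in>{u..<b}. ereal (phis n v) < rs n v"
  proof eventually_elim
    case (elim n)
    show ?case
    proof
      fix v assume v: "v \<in> {u..<b}"
      then have "v \<in> {0..b}" using u by auto
      then have close: "phis n v - phi v < c" "edist (rs n v) (r v) < ereal c"
        using elim by (auto simp: abs_less_iff)
      have "phis n v < M2 - c" using close(1) near[OF v] by (simp add: c_def field_simps)
      moreover have "ereal (M2 - c) < rs n v" using close(2) near[OF v] by (blast intro: edist_gt)
      ultimately show "ereal (phis n v) < rs n v"
        using order.strict_trans[of "ereal (phis n v)" "ereal (M2 - c)"] by simp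
    qed
  qed
  with \<open>b > u\<close> show ?thesis by blast
qed

text \<open>Conditions (2) and (3) of the ESP at the upper boundary; the clause at \<open>t = 0\<close> encodes
  \<open>\<eta>(0-) = 0\<close>.\<close>

definition nondecreasing_while_below :: "(real \<Rightarrow> real) \<Rightarrow> (real \<Rightarrow> ereal) \<Rightarrow> (real \<Rightarrow> real) \<Rightarrow> bool" where
  "nondecreasing_while_below phi r eta \<longleftrightarrow>
     (\<forall>s t. 0 \<le> s \<longrightarrow> s \<le> t \<longrightarrow> (\<forall>u\<in>{s<..t}. ereal (phi u) < r u) \<longrightarrow> eta s \<le> eta t) \<and>
     (ereal (phi 0) < r 0 \<longrightarrow> 0 \<le> eta 0) \<and>
     (\<forall>t>0. ereal (phi t) < r t \<longrightarrow> Lim (at_left t) eta \<le> eta t)"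

context
  fixes phis etas :: "nat \<Rightarrow> real \<Rightarrow> real" and rs :: "nat \<Rightarrow> real \<Rightarrow> ereal"
    and phi eta :: "real \<Rightarrow> real" and r :: "real \<Rightarrow> ereal"
  assumes nondecr: "\<And>n. nondecreasing_while_below (phis n) (rs n) (etas n)"
    and cetas: "\<And>n. cadlag (etas n)"
    and uphi: "ucc phis phi" and ueta: "ucc etas eta" and ur: "ucc_ereal rs r"
    and cphi: "cadlag phi" and ceta: "cadlag eta"
    and cr: "\<And>t. 0 \<le> t \<Longrightarrow> continuous (at_right t) r"
begin

private lemma eventually_below_right:
  assumes u: "0 \<le> u" and below: "ereal (phi u) < r u"
  obtains b where "b > u" "\<forall>\<^sub>F n in sequentially. \<forall>v\<in>{u..<b}. ereal (phis n v) < rs n v"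
proof -
  have "continuous (at_right u) phi" using cphi u by (simp add: cadlag_def)
  with ucc_eventually_strictly_below[OF uphi ur u _ cr[OF u] below] that show ?thesis by blast
qed

private lemma right_locally_mono:
  assumes u: "0 \<le> u" and below: "ereal (phi u) < r u"
  shows "\<exists>\<delta>>0. \<forall>x y. u \<le> x \<longrightarrow> x \<le> y \<longrightarrow> y < u + \<delta> \<longrightarrow> eta x \<le> eta y"
proof -
  obtain b where "b > u" and ev: "\<forall>\<^sub>F n in sequentially. \<forall>v\<in>{u..<b}. ereal (phis n v) < rs n v"
    using eventually_below_right[OF u below] by blast
  have "eta x \<le> eta y" if xy: "u \<le> x" "x \<le> y" "y < b" for x y
  proof (rule tendsto_le[OF _ ucc_pointwise[OF ueta] ucc_pointwise[OF ueta]])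
    show "\<forall>\<^sub>F n in sequentially. etas n x \<le> etas n y"
      using ev
    proof eventually_elim
      case (elim n)
      then have "\<forall>v\<in>{x<..y}. ereal (phis n v) < rs n v" using xy by auto
      then show ?case using nondecr[of n] u xy unfolding nondecreasing_while_below_def by simp
    qed
  qed (use u xy in auto)
  with \<open>b > u\<close> show ?thesis by (intro exI[of _ "b - u"]) auto
qed

private lemma left_limit_le:
  assumes u: "0 < u" and below: "ereal (phi u) < r u"
  shows "Lim (at_left u) eta \<le> eta u"
proof (rule tendsto_le[OF _ ucc_pointwise[OF ueta] ucc_Lim_at_left(1)[OF ueta cetas u]])
  obtain b where "b > u" and ev: "\<forall>\<^sub>F n in sequentially. \<forall>v\<in>{u..<b}. ereal (phis n v) < rs n v"
    using eventually_below_right[OF less_imp_le[OF u] below] by blast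
  show "\<forall>\<^sub>F n in sequentially. Lim (at_left u) (etas n) \<le> etas n u"
    using ev
  proof eventually_elim
    case (elim n)
    then have "ereal (phis n u) < rs n u" using \<open>b > u\<close> by simp
    then show ?case using nondecr[of n] u unfolding nondecreasing_while_below_def by simp
  qed
qed (use u in auto)

private lemma nonneg_at_zero:
  assumes below: "ereal (phi 0) < r 0"
  shows "0 \<le> eta 0"
proof (rule tendsto_lowerbound[OF ucc_pointwise[OF ueta]])
  obtain b where "b > 0" and ev: "\<forall>\<^sub>F n in sequentially. \<forall>v\<in>{0..<b}. ereal (phis n v) < rs n v"
    using eventually_below_right[OF order.refl below] by blast
  show "\<forall>\<^sub>F n in sequentially. 0 \<le> etas n 0"
    using ev
  proof eventually_elim
    case (elim n)
    then have "ereal (phis n 0) < rs n 0" using \<open>b > 0\<close> by simp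
    then show ?case using nondecr[of n] unfolding nondecreasing_while_below_def by simp
  qed
qed auto

private lemma mono_while_below_interior:
  assumes s: "0 \<le> s" "s < a" "a \<le> t" and below: "\<forall>u\<in>{s<..t}. ereal (phi u) < r u"
  shows "eta a \<le> eta t"
proof (rule right_locally_mono_imp_le[where f = eta])
  show "\<exists>\<delta>>0. \<forall>x y. u \<le> x \<longrightarrow> x \<le> y \<longrightarrow> y < u + \<delta> \<longrightarrow> eta x \<le> eta y" if "u \<in> {a..t}" for u
    using that below s by (intro right_locally_mono) auto
  show "\<exists>L. (eta \<longlongrightarrow> L) (at_left u)" if "u \<in> {a<..t}" for u
    using ceta that s by (simp add: cadlag_def)
  show "L \<le> eta u" if "u \<in> {a<..t}" "(eta \<longlongrightarrow> L) (at_left u)" for u L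
  proof -
    have "Lim (at_left u) eta = L" using that(2) by (rule tendsto_Lim[rotated]) simp
    moreover have "0 < u" "ereal (phi u) < r u" using that(1) below s by auto
    ultimately show ?thesis using left_limit_le by blast
  qed
qed (use s in simp)

private lemma mono_while_below:
  assumes st: "0 \<le> s" "s \<le> t" and below: "\<forall>u\<in>{s<..t}. ereal (phi u) < r u"
  shows "eta s \<le> eta t"
proof (cases "s = t")
  case False
  then have "s < t" using st by simp
  have "(eta \<longlongrightarrow> eta s) (at_right s)"
    using ceta st by (simp add: cadlag_def continuous_within)
  moreover have "\<forall>\<^sub>F a in at_right s. eta a \<le> eta t"
    using eventually_at_right_real[OF \<open>s < t\<close>]
    by eventually_elim (use mono_while_below_interior st below in auto)
  ultimately show ?thesis by (rule tendsto_upperbound) simp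
qed simp

lemma nondecreasing_while_below_limit: "nondecreasing_while_below phi r eta"
  unfolding nondecreasing_while_below_def
  using mono_while_below nonneg_at_zero left_limit_le by simp

end

lemma all_nonneg_split: "(\<forall>t::real\<ge>0. P t) \<longleftrightarrow> P 0 \<and> (\<forall>t>0. P t)"
  by (metis less_eq_real_def)

lemma ESP_iff_nondecreasing_while_below:
  "ESP l r psi phi eta \<longleftrightarrow>
     cadlag phi \<and> cadlag eta \<and>
     (\<forall>t\<ge>0. phi t = psi t + eta t \<and> l t \<le> ereal (phi t) \<and> ereal (phi t) \<le> r t) \<and>
     nondecreasing_while_below phi r eta \<and>
     nondecreasing_while_below (\<lambda>t. - phi t) (\<lambda>t. - l t) (\<lambda>t. - eta t)"
proof (cases "cadlag eta")
  case True
  have "Lim (at_left t) (\<lambda>x. - eta x) = - Lim (at_left t) eta" if "0 < t" for t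
    using tendsto_minus[OF cadlag_tendsto_Lim_at_left[OF True that]] by (rule tendsto_Lim[rotated]) simp
  then show ?thesis
    unfolding ESP_def nondecreasing_while_below_def Let_def all_nonneg_split
    by (simp add: True ereal_uminus_compare) blast
qed (simp add: ESP_def)

theorem proposition2p5:
  fixes ls rs :: "nat \<Rightarrow> real \<Rightarrow> ereal"
    and psis phis etas :: "nat \<Rightarrow> real \<Rightarrow> real"
    and l r :: "real \<Rightarrow> ereal"
    and psi phi :: "real \<Rightarrow> real"
  assumes "\<And>n. cadlag_minus (ls n)"
    and "\<And>n. cadlag_plus (rs n)"
    and "\<And>n t. 0 \<le> t \<Longrightarrow> ls n t \<le> rs n t"
    and "\<And>n. cadlag (psis n)"
    and "cadlag_minus l" and "cadlag_plus r" and "cadlag psi"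
    and "ucc psis psi" and "ucc_ereal ls l" and "ucc_ereal rs r"
    and "\<And>n. ESP (ls n) (rs n) (psis n) (phis n) (etas n)"
    and "ucc phis phi"
  shows "ESP l r psi phi (\<lambda>t. phi t - psi t)"
proof -
  note cl = assms(5) and cr = assms(6) and cpsi = assms(7) and upsi = assms(8)
    and ul = assms(9) and ur = assms(10) and uphi = assms(12)
  note esp = assms(11)[unfolded ESP_iff_nondecreasing_while_below]
  define eta where "eta t = phi t - psi t" for t
  have cphi: "cadlag phi" using ucc_cadlag[OF uphi] esp by blast
  have ceta: "cadlag eta" unfolding eta_def using cadlag_diff[OF cphi cpsi] .
  have ueta: "ucc etas eta"
    unfolding eta_def using ucc_cong[OF ucc_diff[OF uphi upsi]] esp by simp
  have "l t \<le> ereal (phi t) \<and> ereal (phi t) \<le> r t" if "0 \<le> t" for t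
    using ul ur uphi that by (rule ucc_limit_between) (use esp that in blast)
  moreover have "nondecreasing_while_below phi r eta"
    using esp cr by (intro nondecreasing_while_below_limit[OF _ _ uphi ueta ur cphi ceta])
      (simp_all add: cadlag_plus_def)
  moreover have "nondecreasing_while_below (\<lambda>t. - phi t) (\<lambda>t. - l t) (\<lambda>t. - eta t)"
    using esp cl
    by (intro nondecreasing_while_below_limit[OF _ _ ucc_uminus[OF uphi] ucc_uminus[OF ueta]
          ucc_ereal_uminus[OF ul] cadlag_uminus[OF cphi] cadlag_uminus[OF ceta]])
      (simp_all add: cadlag_uminus cadlag_minus_def continuous_within tendsto_uminus_ereal)
  ultimately show ?thesis
    using cphi ceta unfolding eta_def by (simp add: ESP_iff_nondecreasing_while_below)
qed
end
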